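(* Let $(Z,\mathbb{Z}^k,S)$ be an aperiodic zero-dimensional system. For every $R>0$ there is $L_0>0$ such that for every positive integer $L\ge L_0$ and every clopen $U\subset Z$ with $Z=\bigcup_{|n|<L}S^nU$ and $U\cap S^nU=\emptyset$ for $0<|n|<L$, the following holds: for every $x\in Z$ and every $n\in C(x)$, \[\frac{|\partial^{\mathbb{Z}}_RV^{\mathbb{Z}}(x,n)|}{|V^{\mathbb{Z}}(x,n)|}<\frac1R.\]
   Context: Given such $L$ and $U$: $C(x)=\{n\in\mathbb{Z}^k: S^nx\in U\}$; for $n\in C(x)$, $V(x,n)=\{u\in\mathbb{R}^k:|u-n|\le|u-m|\ \forall m\in C(x)\}$ (Euclidean norm) and $V^{\mathbb{Z}}(x,n)=V(x,n)\cap\mathbb{Z}^k$. For $\Omega\subset\mathbb{Z}^k$ and $R>0$, $\partial^{\mathbb{Z}}_R\Omega$ is the set of $n\in\mathbb{Z}^k$ for which there exist $m\in\Omega$ and $m'\in\mathbb{Z}^k\setminus\Omega$ with $|n-m|\le R$ and $|n-m'|\le R$. Aperiodic: the action is free; zero-dimensional: clopen sets form a basis. *)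

theory Defs
  imports "HOL-Analysis.Analysis"
begin

text \<open>Lattice points of \<open>\<int>^k\<close> are vectors \<open>int ^ 'k\<close>; the dimension is \<open>k = CARD('k)\<close>.\<close>

definition rvec :: "int ^ 'k \<Rightarrow> real ^ 'k" where
  "rvec n = (\<chi> i. real_of_int (n $ i))"

definition znorm :: "int ^ 'k \<Rightarrow> real" where
  "znorm n = norm (rvec n)"

definition zk_system :: "(int ^ 'k \<Rightarrow> 'a::metric_space \<Rightarrow> 'a) \<Rightarrow> bool" where
  "zk_system S \<longleftrightarrow> compact (UNIV :: 'a set) \<and>
     (\<forall>n. continuous_on UNIV (S n)) \<and>
     S 0 = id \<and> (\<forall>m n. S (m + n) = S m \<circ> S n)"

definition aperiodic :: "(int ^ 'k \<Rightarrow> 'a \<Rightarrow> 'a) \<Rightarrow> bool" where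
  "aperiodic S \<longleftrightarrow> (\<forall>x n. S n x = x \<longrightarrow> n = 0)"

definition zero_dimensional :: "'a::topological_space itself \<Rightarrow> bool" where
  "zero_dimensional _ \<longleftrightarrow>
     (\<forall>V x. open (V::'a set) \<and> x \<in> V \<longrightarrow> (\<exists>W. open W \<and> closed W \<and> x \<in> W \<and> W \<subseteq> V))"

definition retC :: "(int ^ 'k \<Rightarrow> 'a \<Rightarrow> 'a) \<Rightarrow> 'a set \<Rightarrow> 'a \<Rightarrow> (int ^ 'k) set" where
  "retC S U x = {n. S n x \<in> U}"

definition voronoi :: "(int ^ 'k \<Rightarrow> 'a \<Rightarrow> 'a) \<Rightarrow> 'a set \<Rightarrow> 'a \<Rightarrow> int ^ 'k \<Rightarrow> (real ^ 'k) set" where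
  "voronoi S U x n = {u. \<forall>m \<in> retC S U x. dist u (rvec n) \<le> dist u (rvec m)}"

definition voronoiZ :: "(int ^ 'k \<Rightarrow> 'a \<Rightarrow> 'a) \<Rightarrow> 'a set \<Rightarrow> 'a \<Rightarrow> int ^ 'k \<Rightarrow> (int ^ 'k) set" where
  "voronoiZ S U x n = {m. rvec m \<in> voronoi S U x n}"

definition boundaryZ :: "real \<Rightarrow> (int ^ 'k) set \<Rightarrow> (int ^ 'k) set" where
  "boundaryZ R \<Omega> = {n. (\<exists>m \<in> \<Omega>. znorm (n - m) \<le> R) \<and> (\<exists>m'. m' \<notin> \<Omega> \<and> znorm (n - m') \<le> R)}"

end

theory Submission
  imports Defs
begin

text \<open>The return times \<open>C(x)\<close> of a tower base \<open>U\<close> of height \<open>L\<close> form a Delone set: distinct points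
  are at distance at least \<open>L\<close>, and every lattice point is within distance \<open>L\<close> of one. Hence the
  Voronoi cell \<open>V\<close> of \<open>n \<in> C(x)\<close> is a convex body squeezed between the balls of radii \<open>L/2\<close> and
  \<open>L + k/2\<close> about \<open>n\<close>. Tiling by unit cubes, lattice points near the boundary of \<open>V\<close> lie in the shell
  between the homothetic copies \<open>(1 \<plusminus> t)V\<close>, while the points of \<open>V\<close> cover \<open>(1 - t)V\<close>, as soon as
  \<open>R + k/2 \<le> tL/2\<close>. So the ratio is at most \<open>((1+t)^k - (1-t)^k)/(1-t)^k\<close>, which is below \<open>1/R\<close>
  for small \<open>t\<close>; this determines \<open>L\<^sub>0\<close>. Aperiodicity and zero-dimensionality only serve to
  guarantee that such bases \<open>U\<close> exist; the estimate itself does not use them.\<close>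

lemma rvec_diff: "rvec (a - b) = rvec a - rvec b"
  by (simp add: rvec_def vec_eq_iff)

lemma rvec_eq_0_iff: "rvec a = 0 \<longleftrightarrow> a = 0"
  by (simp add: rvec_def vec_eq_iff)

lemma znorm_diff: "znorm (a - b) = dist (rvec a) (rvec b)"
  by (simp add: znorm_def rvec_diff dist_norm)

section \<open>Counting lattice points by volume\<close>

definition lattice_cube :: "int ^ 'k \<Rightarrow> (real ^ 'k) set" where
  "lattice_cube p = cbox (rvec p - (\<chi> i. 1/2)) (rvec p + (\<chi> i. 1/2))"

lemma mem_lattice_cube: "y \<in> lattice_cube p \<longleftrightarrow> (\<forall>i. \<bar>y $ i - real_of_int (p $ i)\<bar> \<le> 1/2)"
  unfolding lattice_cube_def mem_box_cart by (intro iff_allI) (auto simp: rvec_def split: abs_split)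

lemma mem_lattice_cube_round: "y \<in> lattice_cube (\<chi> i. round (y $ i))"
proof -
  have "\<bar>y $ i - real_of_int (round (y $ i))\<bar> \<le> 1/2" for i
    using of_int_round_abs_le[of "y $ i"] by (simp add: abs_minus_commute)
  then show ?thesis by (simp add: mem_lattice_cube)
qed

lemma dist_le_of_mem_lattice_cube:
  assumes "y \<in> lattice_cube (p :: int ^ 'k)"
  shows "dist y (rvec p) \<le> real CARD('k) / 2"
proof -
  have "dist y (rvec p) \<le> (\<Sum>i\<in>UNIV. \<bar>(y - rvec p) $ i\<bar>)"
    unfolding dist_norm by (rule norm_le_l1_cart)
  also have "\<dots> \<le> (\<Sum>i\<in>(UNIV::'k set). 1/2)"
    by (rule sum_mono) (use assms in \<open>simp add: mem_lattice_cube rvec_def\<close>)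
  finally show ?thesis by simp
qed

lemma lattice_cube_lmeasurable: "lattice_cube p \<in> lmeasurable"
  by (simp add: lattice_cube_def)

lemma measure_lattice_cube: "measure lebesgue (lattice_cube p) = 1"
proof -
  have "lattice_cube p \<noteq> {}"
    using mem_lattice_cube[of "rvec p" p] by (auto simp: rvec_def)
  moreover have "measure lebesgue (lattice_cube p) = measure lborel (lattice_cube p)"
    unfolding lattice_cube_def by (metis cbox_borel measure_completion sets_lborel)
  ultimately show ?thesis
    unfolding lattice_cube_def by (subst (asm) content_cbox_cart) simp_all
qed

lemma negligible_lattice_cube_Int:
  assumes "p \<noteq> q"
  shows "negligible (lattice_cube p \<inter> lattice_cube (q :: int ^ 'k))"
proof -
  obtain i where i: "p $ i \<noteq> q $ i" using assms by (auto simp: vec_eq_iff)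
  define a where "a = (real_of_int (p $ i) + real_of_int (q $ i)) / 2"
  have "lattice_cube p \<inter> lattice_cube q \<subseteq> {x. x \<bullet> axis i 1 = a}"
  proof
    fix x assume "x \<in> lattice_cube p \<inter> lattice_cube q"
    then have "\<bar>x $ i - real_of_int (p $ i)\<bar> \<le> 1/2" "\<bar>x $ i - real_of_int (q $ i)\<bar> \<le> 1/2"
      by (auto simp: mem_lattice_cube)
    moreover have "real_of_int (p $ i) + 1 \<le> real_of_int (q $ i) \<or>
        real_of_int (q $ i) + 1 \<le> real_of_int (p $ i)"
      using i by linarith
    ultimately have "2 * x $ i = real_of_int (p $ i) + real_of_int (q $ i)"
      unfolding abs_le_iff by (elim conjE disjE) linarith+
    then have "x $ i = a"
      by (simp add: a_def)
    then show "x \<in> {x. x \<bullet> axis i 1 = a}"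
      by (simp add: cart_eq_inner_axis[symmetric])
  qed
  moreover have "axis i (1::real) \<in> Basis"
    by (simp add: Basis_vec_def) blast
  ultimately show ?thesis
    using negligible_standard_hyperplane negligible_subset by blast
qed

lemma card_le_measure_if_lattice_cubes_subset:
  assumes A: "A \<in> lmeasurable" and sub: "\<And>p. p \<in> P \<Longrightarrow> lattice_cube p \<subseteq> A"
  shows "finite (P :: (int ^ 'k) set)" and "real (card P) \<le> measure lebesgue A"
proof -
  have bound: "real (card F) \<le> measure lebesgue A" if F: "finite F" "F \<subseteq> P" for F
  proof -
    have "real (card F) = (\<Sum>p\<in>F. measure lebesgue (lattice_cube p))"
      by (simp add: measure_lattice_cube)
    also have "\<dots> = measure lebesgue (\<Union>(lattice_cube ` F))"
      by (rule measure_negligible_finite_Union_image[symmetric])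
        (use F in \<open>auto simp: lattice_cube_lmeasurable pairwise_def negligible_lattice_cube_Int\<close>)
    also have "\<dots> \<le> measure lebesgue A"
      by (rule measure_mono_fmeasurable)
        (use F sub A in \<open>auto intro: fmeasurableD[OF fmeasurable.finite_UN] lattice_cube_lmeasurable\<close>)
    finally show ?thesis .
  qed
  show "finite P"
  proof (rule ccontr)
    assume "infinite P"
    then obtain F where "F \<subseteq> P" "finite F" "card F = nat \<lceil>measure lebesgue A\<rceil> + 1"
      using infinite_arbitrarily_large by blast
    with bound[of F] show False by linarith
  qed
  with bound show "real (card P) \<le> measure lebesgue A" by auto
qed

lemma measure_le_card_if_subset_lattice_cubes:
  assumes P: "finite (P :: (int ^ 'k) set)" and B: "B \<in> lmeasurable"
    and sub: "B \<subseteq> (\<Union>p\<in>P. lattice_cube p)"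
  shows "measure lebesgue B \<le> real (card P)"
proof -
  have "measure lebesgue B \<le> measure lebesgue (\<Union>p\<in>P. lattice_cube p)"
    by (rule measure_mono_fmeasurable)
      (use P sub B in \<open>auto intro: fmeasurable.finite_UN lattice_cube_lmeasurable\<close>)
  also have "\<dots> \<le> (\<Sum>p\<in>P. measure lebesgue (lattice_cube p))"
    by (rule measure_UNION_le) (use P in \<open>auto intro: fmeasurableD lattice_cube_lmeasurable\<close>)
  also have "\<dots> = real (card P)"
    by (simp add: measure_lattice_cube)
  finally show ?thesis .
qed

section \<open>Homothetic copies of a convex body\<close>

definition homothety :: "real \<Rightarrow> 'a::real_vector \<Rightarrow> 'a set \<Rightarrow> 'a set" where
  "homothety l c V = (\<lambda>y. l *\<^sub>R y + (1 - l) *\<^sub>R c) ` V"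

lemma homothety_expand_contains_cball:
  fixes V :: "'a::real_normed_vector set"
  assumes V: "convex V" and ball: "cball c r \<subseteq> V" and t: "0 < t"
    and v: "v \<in> V" and w: "norm w \<le> t * r"
  shows "v + w \<in> homothety (1 + t) c V"
proof -
  define z where "z = c + (1/t) *\<^sub>R w"
  have "dist c z \<le> r"
    using w t by (simp add: z_def dist_norm divide_le_eq mult.commute)
  then have z: "z \<in> V" using ball by auto
  define v' where "v' = (1/(1+t)) *\<^sub>R v + (t/(1+t)) *\<^sub>R z"
  have "v' \<in> V" unfolding v'_def
    by (rule convexD[OF V v z]) (use t in \<open>auto simp: field_simps\<close>)
  moreover have "v + w = (1 + t) *\<^sub>R v' + (1 - (1 + t)) *\<^sub>R c"
    using t by (simp add: v'_def z_def scaleR_add_right algebra_simps) (simp add: field_simps)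
  ultimately show ?thesis unfolding homothety_def by blast
qed

lemma homothety_shrink_add_cball:
  fixes V :: "'a::real_normed_vector set"
  assumes V: "convex V" and ball: "cball c r \<subseteq> V" and t: "0 < t" "t \<le> 1"
    and y: "y \<in> homothety (1 - t) c V" and w: "norm w \<le> t * r"
  shows "y + w \<in> V"
proof -
  define z where "z = c + (1/t) *\<^sub>R w"
  have "dist c z \<le> r"
    using w t by (simp add: z_def dist_norm divide_le_eq mult.commute)
  then have z: "z \<in> V" using ball by auto
  obtain v where v: "v \<in> V" and yv: "y = (1 - t) *\<^sub>R v + (1 - (1 - t)) *\<^sub>R c"
    using y unfolding homothety_def by blast
  have "y + w = (1 - t) *\<^sub>R v + t *\<^sub>R z"
    using t by (simp add: yv z_def scaleR_add_right algebra_simps)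
  also have "\<dots> \<in> V"
    by (rule convexD[OF V v z]) (use t in auto)
  finally show ?thesis .
qed

lemma homothety_shrink_subset_expand:
  fixes V :: "'a::real_normed_vector set"
  assumes "convex V" "cball c r \<subseteq> V" "0 < t" "t \<le> 1" "0 \<le> r"
  shows "homothety (1 - t) c V \<subseteq> homothety (1 + t) c V"
  using homothety_shrink_add_cball[OF assms(1-4), of _ 0] homothety_expand_contains_cball[OF assms(1-3), of _ 0] assms
  by auto

lemma
  fixes V :: "'a::euclidean_space set"
  assumes "compact V" and "0 \<le> l"
  shows lmeasurable_homothety: "homothety l c V \<in> lmeasurable"
    and measure_homothety: "measure lebesgue (homothety l c V) = l ^ DIM('a) * measure lebesgue V"
proof -
  have "compact (homothety l c V)" unfolding homothety_def
    by (rule compact_continuous_image[OF _ assms(1)]) (intro continuous_intros)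
  then show "homothety l c V \<in> lmeasurable" by (rule lmeasurable_compact)
  show "measure lebesgue (homothety l c V) = l ^ DIM('a) * measure lebesgue V"
    unfolding homothety_def using measure_lebesgue_affine[of l "(1 - l) *\<^sub>R c" V] assms(2) by simp
qed

lemma exists_homothety_shell_ratio_lt:
  fixes R :: real
  assumes "R > 0"
  shows "\<exists>t. 0 < t \<and> t < 1 \<and> (1 + t) ^ k - (1 - t) ^ k < (1 / R) * (1 - t) ^ k"
proof -
  define g where "g t = (1 + t) ^ k - (1 - t) ^ k - (1 / R) * (1 - t) ^ k" for t :: real
  have "(g \<longlongrightarrow> g 0) (at 0)"
    unfolding g_def by (intro tendsto_intros)
  moreover have "g 0 < 0" using assms by (simp add: g_def)
  ultimately have "eventually (\<lambda>t. g t < 0) (at 0)" by (rule order_tendstoD(2))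
  then obtain d where d: "d > 0" "\<And>t. t \<noteq> 0 \<Longrightarrow> dist t 0 < d \<Longrightarrow> g t < 0"
    by (auto simp: eventually_at)
  define t where "t = min (d/2) (1/2)"
  have "0 < t" "t < 1" "dist t 0 < d" using d(1) by (auto simp: t_def)
  then show ?thesis using d(2)[of t] by (intro exI[of _ t]) (auto simp: g_def)
qed

lemma
  fixes V :: "(real ^ 'k) set"
  assumes V: "convex V" "compact V" and ball: "cball c r \<subseteq> V"
    and t: "0 < t" "t < 1" and tr: "real CARD('k) / 2 \<le> t * r"
  shows finite_lattice_points_convex_body: "finite {p. rvec p \<in> V}"
    and measure_shrunk_le_card_lattice_points:
      "(1 - t) ^ CARD('k) * measure lebesgue V \<le> card {p. rvec p \<in> V}"
proof -
  have "lattice_cube p \<subseteq> homothety (1 + t) c V" if "rvec p \<in> V" for p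
  proof
    fix y assume "y \<in> lattice_cube p"
    then have "norm (y - rvec p) \<le> t * r"
      using dist_le_of_mem_lattice_cube tr by (fastforce simp: dist_norm)
    then have "rvec p + (y - rvec p) \<in> homothety (1 + t) c V"
      by (rule homothety_expand_contains_cball[OF V(1) ball t(1) that])
    then show "y \<in> homothety (1 + t) c V" by simp
  qed
  then show fin: "finite {p. rvec p \<in> V}"
    using t lmeasurable_homothety[OF V(2), of "1 + t" c]
    by (intro card_le_measure_if_lattice_cubes_subset(1)) auto
  have "homothety (1 - t) c V \<subseteq> (\<Union>p\<in>{p. rvec p \<in> V}. lattice_cube p)"
  proof
    fix y assume y: "y \<in> homothety (1 - t) c V"
    define p :: "int ^ 'k" where "p = (\<chi> i. round (y $ i))"
    have p: "y \<in> lattice_cube p"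
      unfolding p_def by (rule mem_lattice_cube_round)
    then have "norm (rvec p - y) \<le> t * r"
      using dist_le_of_mem_lattice_cube tr by (fastforce simp: dist_norm norm_minus_commute)
    then have "y + (rvec p - y) \<in> V"
      by (rule homothety_shrink_add_cball[OF V(1) ball t(1) less_imp_le[OF t(2)] y])
    with p show "y \<in> (\<Union>p\<in>{p. rvec p \<in> V}. lattice_cube p)" by auto
  qed
  then have "measure lebesgue (homothety (1 - t) c V) \<le> card {p. rvec p \<in> V}"
    using t by (intro measure_le_card_if_subset_lattice_cubes[OF fin] lmeasurable_homothety V) auto
  then show "(1 - t) ^ CARD('k) * measure lebesgue V \<le> card {p. rvec p \<in> V}"
    using measure_homothety[OF V(2), of "1 - t"] t by simp
qed

text \<open>A lattice point within distance \<open>R\<close> of both a point of \<open>V\<close> and a point outside \<open>V\<close> has its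
  whole unit cube in the shell between the two homothetic copies.\<close>

lemma card_boundaryZ_lattice_points_le:
  fixes V :: "(real ^ 'k) set"
  assumes V: "convex V" "compact V" and ball: "cball c r \<subseteq> V" and R: "0 \<le> R"
    and t: "0 < t" "t < 1" and tr: "R + real CARD('k) / 2 \<le> t * r"
  shows "card (boundaryZ R {p. rvec p \<in> V})
    \<le> ((1 + t) ^ CARD('k) - (1 - t) ^ CARD('k)) * measure lebesgue V"
proof -
  define A where "A = homothety (1 + t) c V - homothety (1 - t) c V"
  have meas: "homothety (1 + t) c V \<in> lmeasurable" "homothety (1 - t) c V \<in> lmeasurable"
    using t by (auto intro: lmeasurable_homothety V)
  have "0 \<le> t * r"
    using tr R by (smt (verit) of_nat_0_le_iff divide_nonneg_pos)
  then have "0 \<le> r"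
    using t by (simp add: zero_le_mult_iff)
  then have "measure lebesgue A
      = ((1 + t) ^ CARD('k) - (1 - t) ^ CARD('k)) * measure lebesgue V"
    unfolding A_def using t homothety_shrink_subset_expand[OF V(1) ball t(1) _ \<open>0 \<le> r\<close>]
    by (simp add: measurable_measure_Diff meas fmeasurableD measure_homothety[OF V(2)]
        left_diff_distrib)
  moreover have "real (card (boundaryZ R {p. rvec p \<in> V})) \<le> measure lebesgue A"
  proof (rule card_le_measure_if_lattice_cubes_subset(2))
    show "A \<in> lmeasurable"
      unfolding A_def using meas by (intro fmeasurable_Diff fmeasurableD) auto
    fix p assume "p \<in> boundaryZ R {p. rvec p \<in> V}"
    then obtain m m' where m: "rvec m \<in> V" "znorm (p - m) \<le> R"
      and m': "rvec m' \<notin> V" "znorm (p - m') \<le> R"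
      by (auto simp: boundaryZ_def)
    show "lattice_cube p \<subseteq> A"
    proof
      fix y assume "y \<in> lattice_cube p"
      then have yp: "dist y (rvec p) \<le> real CARD('k) / 2"
        by (rule dist_le_of_mem_lattice_cube)
      have "norm (y - rvec m) \<le> t * r"
        using dist_triangle[of y "rvec m" "rvec p"] yp m(2) tr
        by (simp add: znorm_diff dist_norm dist_commute)
      then have "rvec m + (y - rvec m) \<in> homothety (1 + t) c V"
        by (rule homothety_expand_contains_cball[OF V(1) ball t(1) m(1)])
      moreover have "y \<notin> homothety (1 - t) c V"
      proof
        assume "y \<in> homothety (1 - t) c V"
        moreover have "norm (rvec m' - y) \<le> t * r"
          using dist_triangle[of "rvec m'" y "rvec p"] yp m'(2) tr
          by (simp add: znorm_diff dist_norm dist_commute norm_minus_commute)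
        ultimately have "y + (rvec m' - y) \<in> V"
          by (rule homothety_shrink_add_cball[OF V(1) ball t(1) less_imp_le[OF t(2)]])
        with m'(1) show False by simp
      qed
      ultimately show "y \<in> A" by (simp add: A_def)
    qed
  qed
  ultimately show ?thesis by simp
qed

lemma boundaryZ_lattice_points_ratio_lt:
  fixes V :: "(real ^ 'k) set"
  assumes V: "convex V" "compact V" and ball: "cball c r \<subseteq> V" and r: "0 < r" and R: "0 < R"
    and t: "0 < t" "t < 1" and tr: "R + real CARD('k) / 2 \<le> t * r"
    and shell: "(1 + t) ^ CARD('k) - (1 - t) ^ CARD('k) < (1 / R) * (1 - t) ^ CARD('k)"
  shows "real (card (boundaryZ R {p. rvec p \<in> V})) / real (card {p. rvec p \<in> V}) < 1 / R"
proof -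
  define \<mu> where "\<mu> = measure lebesgue V"
  have "0 < measure lborel (cball c r)"
    using content_cball_pos[OF r] by simp
  also have "\<dots> = measure lebesgue (cball c r)"
    by (metis borel_closed closed_cball measure_completion sets_lborel)
  also have "\<dots> \<le> \<mu>"
    unfolding \<mu>_def using ball V(2) by (intro measure_mono_fmeasurable lmeasurable_compact) auto
  finally have "0 < \<mu>" .
  have tr': "real CARD('k) / 2 \<le> t * r"
    using tr R by linarith
  have "real (card (boundaryZ R {p. rvec p \<in> V}))
      \<le> ((1 + t) ^ CARD('k) - (1 - t) ^ CARD('k)) * \<mu>"
    unfolding \<mu>_def using R by (intro card_boundaryZ_lattice_points_le[OF V ball _ t tr]) auto
  also have "\<dots> < (1 / R) * ((1 - t) ^ CARD('k) * \<mu>)"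
    using mult_strict_right_mono[OF shell \<open>0 < \<mu>\<close>] by simp
  also have "\<dots> \<le> (1 / R) * card {p. rvec p \<in> V}"
    using measure_shrunk_le_card_lattice_points[OF V ball t tr'] R
    by (intro mult_left_mono) (simp_all add: \<mu>_def)
  finally show ?thesis
    using R by (simp add: divide_less_eq field_simps split: if_split_asm)
qed

section \<open>Voronoi cells of Delone sets\<close>

definition voronoi_cell :: "(int ^ 'k) set \<Rightarrow> int ^ 'k \<Rightarrow> (real ^ 'k) set" where
  "voronoi_cell C n = (\<Inter>m\<in>C. {u. dist u (rvec n) \<le> dist u (rvec m)})"

lemma voronoiZ_eq_voronoi_cell: "voronoiZ S U x n = {p. rvec p \<in> voronoi_cell (retC S U x) n}"
  by (auto simp: voronoiZ_def voronoi_def voronoi_cell_def)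

lemma convex_dist_le_dist:
  fixes a b :: "'a::euclidean_space"
  shows "convex {u. dist u a \<le> dist u b}"
proof -
  have "dist u a \<le> dist u b \<longleftrightarrow> inner (2 *\<^sub>R (b - a)) u \<le> inner b b - inner a a" for u
  proof -
    have sq: "(dist u a)\<^sup>2 = inner u u - 2 * inner a u + inner a a" for a
      by (simp add: dist_norm power2_norm_eq_inner inner_diff_left inner_diff_right inner_commute)
    have "dist u a \<le> dist u b \<longleftrightarrow> (dist u a)\<^sup>2 \<le> (dist u b)\<^sup>2"
      by (metis abs_le_square_iff abs_of_nonneg zero_le_dist)
    then show ?thesis
      using sq[of a] sq[of b] by (simp add: inner_diff_left) (simp add: algebra_simps)
  qed
  then have "{u. dist u a \<le> dist u b} = {u. inner (2 *\<^sub>R (b - a)) u \<le> inner b b - inner a a}"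
    by blast
  then show ?thesis
    by (simp only:) (rule convex_halfspace_le)
qed

lemma convex_voronoi_cell: "convex (voronoi_cell C n)"
  unfolding voronoi_cell_def by (intro convex_INT ballI convex_dist_le_dist)

lemma closed_voronoi_cell: "closed (voronoi_cell C n)"
  unfolding voronoi_cell_def by (intro closed_INT ballI closed_Collect_le continuous_intros)

lemma cball_subset_voronoi_cell:
  assumes "\<And>m. m \<in> C \<Longrightarrow> m \<noteq> n \<Longrightarrow> 2 * r \<le> dist (rvec m) (rvec n)"
  shows "cball (rvec n) r \<subseteq> voronoi_cell C n"
proof (clarsimp simp: voronoi_cell_def)
  fix u m assume "dist (rvec n) u \<le> r" "m \<in> C"
  then show "dist u (rvec n) \<le> dist u (rvec m)"
    using assms[of m] dist_triangle[of "rvec m" "rvec n" u]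
    by (cases "m = n") (auto simp: dist_commute)
qed

text \<open>Every point of the cell is within \<open>k/2\<close> of a lattice point, which is within \<open>L\<close> of \<open>C\<close>.\<close>

lemma voronoi_cell_subset_cball:
  fixes C :: "(int ^ 'k) set"
  assumes "\<And>p. \<exists>m\<in>C. dist (rvec p) (rvec m) < L"
  shows "voronoi_cell C n \<subseteq> cball (rvec n) (L + real CARD('k) / 2)"
proof
  fix u assume u: "u \<in> voronoi_cell C n"
  define p :: "int ^ 'k" where "p = (\<chi> i. round (u $ i))"
  have up: "dist u (rvec p) \<le> real CARD('k) / 2"
    unfolding p_def by (rule dist_le_of_mem_lattice_cube[OF mem_lattice_cube_round])
  obtain m where "m \<in> C" "dist (rvec p) (rvec m) < L"
    using assms by blast
  then show "u \<in> cball (rvec n) (L + real CARD('k) / 2)"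
    using u up dist_triangle[of u "rvec m" "rvec p"]
    by (auto simp: voronoi_cell_def dist_commute)
qed

lemma voronoi_cell_boundaryZ_ratio_lt:
  fixes C :: "(int ^ 'k) set"
  assumes sep: "\<And>m m'. m \<in> C \<Longrightarrow> m' \<in> C \<Longrightarrow> m \<noteq> m' \<Longrightarrow> L \<le> dist (rvec m) (rvec m')"
    and cov: "\<And>p. \<exists>m\<in>C. dist (rvec p) (rvec m) < L"
    and n: "n \<in> C" and R: "0 < R" and t: "0 < t" "t < 1"
    and L: "2 * (R + real CARD('k)) / t \<le> L"
    and shell: "(1 + t) ^ CARD('k) - (1 - t) ^ CARD('k) < (1 / R) * (1 - t) ^ CARD('k)"
  shows "real (card (boundaryZ R {p. rvec p \<in> voronoi_cell C n}))
    / real (card {p. rvec p \<in> voronoi_cell C n}) < 1 / R"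
proof (rule boundaryZ_lattice_points_ratio_lt[OF convex_voronoi_cell _ _ _ R t _ shell])
  show "compact (voronoi_cell C n)"
    using voronoi_cell_subset_cball[OF cov] closed_voronoi_cell
    by (meson bounded_cball bounded_subset compact_eq_bounded_closed)
  show "cball (rvec n) (L / 2) \<subseteq> voronoi_cell C n"
    using sep n by (intro cball_subset_voronoi_cell) simp
  have "2 * (R + real CARD('k)) \<le> t * L"
    using L t by (simp add: divide_le_eq mult.commute)
  moreover from this have "0 < t * L"
    using R by (smt (verit) of_nat_0_le_iff)
  ultimately show "0 < L / 2" "R + real CARD('k) / 2 \<le> t * (L / 2)"
    using t by (auto simp: zero_less_mult_iff)
qed

section \<open>Return times to the base of a tower\<close>

lemma retC_separated:
  assumes action: "\<And>m n. S (m + n) = S m \<circ> S n"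
    and disj: "\<And>n. 0 < znorm n \<Longrightarrow> znorm n < L \<Longrightarrow> U \<inter> S n ` U = {}"
    and mn: "m \<in> retC S U x" "n \<in> retC S U x" "m \<noteq> n"
  shows "L \<le> dist (rvec m) (rvec n)"
proof (rule ccontr)
  assume "\<not> L \<le> dist (rvec m) (rvec n)"
  then have "znorm (m - n) < L"
    by (simp add: znorm_diff)
  moreover have "0 < znorm (m - n)"
    using mn(3) by (simp add: znorm_def rvec_eq_0_iff)
  moreover have "S m x = S (m - n) (S n x)"
    using action[of "m - n" n] by simp
  then have "S m x \<in> U \<inter> S (m - n) ` U"
    using mn by (auto simp: retC_def)
  ultimately show False
    using disj by blast
qed

lemma retC_covering:
  assumes action: "S 0 = id" "\<And>m n. S (m + n) = S m \<circ> S n"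
    and cov: "UNIV = (\<Union>n \<in> {n. znorm n < L}. S n ` U)"
  shows "\<exists>m\<in>retC S U x. dist (rvec p) (rvec m) < L"
proof -
  obtain q u where q: "znorm q < L" "u \<in> U" "S p x = S q u"
    using cov by (metis (no_types, lifting) UNIV_I UN_E imageE mem_Collect_eq)
  have "S (- q) (S q u) = u"
    using action by (metis add.left_inverse comp_apply id_apply)
  then have "S (p - q) x = u"
    using action(2)[of "- q" p] q(3) by simp
  then have "p - q \<in> retC S U x"
    using q(2) by (simp add: retC_def)
  moreover have "dist (rvec p) (rvec (p - q)) < L"
    using q(1) by (simp add: znorm_diff[symmetric])
  ultimately show ?thesis by blast
qed

theorem lemma3p5:
  fixes S :: "int ^ 'k \<Rightarrow> 'a::metric_space \<Rightarrow> 'a"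
  assumes "zk_system S" and "aperiodic S" and "zero_dimensional TYPE('a)"
  shows "\<forall>R > 0. \<exists>L0 > 0. \<forall>(L::nat) (U::'a set).
           L > 0 \<and> real L \<ge> L0 \<and> open U \<and> closed U \<and>
           UNIV = (\<Union>n \<in> {n. znorm n < real L}. S n ` U) \<and>
           (\<forall>n. 0 < znorm n \<and> znorm n < real L \<longrightarrow> U \<inter> S n ` U = {}) \<longrightarrow>
           (\<forall>x. \<forall>n \<in> retC S U x.
              real (card (boundaryZ R (voronoiZ S U x n))) / real (card (voronoiZ S U x n)) < 1 / R)"
proof (intro allI impI, goal_cases)
  case (1 R)
  then obtain t where t: "0 < t" "t < 1"
    and shell: "(1 + t) ^ CARD('k) - (1 - t) ^ CARD('k) < (1 / R) * (1 - t) ^ CARD('k)"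
    using exists_homothety_shell_ratio_lt by blast
  have action: "S 0 = id" "\<And>m n. S (m + n) = S m \<circ> S n"
    using assms(1) by (auto simp: zk_system_def)
  show ?case
  proof (intro exI[of _ "2 * (R + real CARD('k)) / t"] conjI allI impI ballI, goal_cases)
    case 1
    then show ?case using \<open>0 < R\<close> t by simp
  next
    case (2 L U x n)
    then have disj: "\<And>m. 0 < znorm m \<Longrightarrow> znorm m < real L \<Longrightarrow> U \<inter> S m ` U = {}"
      by blast
    show ?case
      unfolding voronoiZ_eq_voronoi_cell
      using 2 retC_covering[OF action] retC_separated[OF action(2) disj] \<open>0 < R\<close> t shell
      by (intro voronoi_cell_boundaryZ_ratio_lt) auto
  qed
qed

end
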